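(* Let $p\geq 2$ and let $h\in C^2(\mathbb{R}^n)$ be nonnegative, positively homogeneous of degree $p$, and such that there are constants $0<\lambda\le\Lambda$ with $$\lambda |v|^2\leq \langle D^2h(x)v,v\rangle\leq \Lambda |v|^2\qquad\text{for all } x\in S^{n-1},\ v\in\mathbb{R}^n.$$ Let $T$ be an $h$-monotone map with $T\in L^{p-1}_{\mathrm{loc}}(\mathbb{R}^n)$, let $A\in\mathbb{R}^{n\times n}$, $b\in\mathbb{R}^n$, $0<\beta<1$, and set $u(x)=Tx-Ax-b$. Then there are constants $C(n,p,\beta)>0$, $K_1>0$ depending only on $n,p,\lambda,\Lambda,\|A\|$, and $K_2>0$ depending only on $n,p,\lambda,\Lambda,\|A\|,\beta$, such that for each $x_0\in\mathbb{R}^n$ and $R>0$: $$\sup_{x\in B_{\beta R}(x_0)}|u(x)|\leq \begin{cases} K_1\,R\left(R^{-(p-1)}\fint_{B_R(x_0)}|u(x)|^{p-1}dx\right)^{1/(n+p-1)} & \text{if } \left(\fint_{B_R(x_0)}|u|^{p-1}dx\right)^{1/(p-1)}\leq C(n,p,\beta)R,\\[2mm] K_2\,R\left(R^{-(p-1)}\fint_{B_R(x_0)}|u(x)|^{p-1}dx\right)^{1/(p-1)} & \text{if } \left(\fint_{B_R(x_0)}|u|^{p-1}dx\right)^{1/(p-1)}\geq C(n,p,\beta)R.\end{cases}$$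
   Context: A multivalued map $T:\mathbb{R}^n\to\mathcal P(\mathbb{R}^n)$ is called $h$-monotone if $h(x-\xi)+h(y-\zeta)\leq h(x-\zeta)+h(y-\xi)$ for all $x,y\in\mathrm{dom}(T)=\{x: T(x)\neq\emptyset\}$ and all $\xi\in T(x)$, $\zeta\in T(y)$. For the costs $h$ considered, such maps are single-valued almost everywhere, so $T$ is regarded as an a.e. defined function $\mathbb{R}^n\to\mathbb{R}^n$, and $T\in L^{p-1}_{\mathrm{loc}}$ refers to this function. $\fint_B$ denotes the average over $B$, $B_r(x)$ the open ball of radius $r$ centered at $x$, $\|A\|$ the operator norm, and the supremum is understood as an essential supremum. *)

theory Defs
  imports "HOL-Analysis.Analysis"
begin

text \<open>h-monotonicity of a multivalued map T (dom T = points with T x nonempty).\<close>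
definition h_monotone :: "('a::real_normed_vector \<Rightarrow> real) \<Rightarrow> ('a \<Rightarrow> 'a set) \<Rightarrow> bool" where
  "h_monotone h T \<longleftrightarrow>
     (\<forall>x y \<xi> \<zeta>. \<xi> \<in> T x \<longrightarrow> \<zeta> \<in> T y \<longrightarrow>
        h (x - \<xi>) + h (y - \<zeta>) \<le> h (x - \<zeta>) + h (y - \<xi>))"

definition C2_with :: "(real^'n \<Rightarrow> real) \<Rightarrow> (real^'n \<Rightarrow> real^'n) \<Rightarrow> (real^'n \<Rightarrow> real^'n^'n) \<Rightarrow> bool" where
  "C2_with h g H \<longleftrightarrow>
     (\<forall>x. (h has_derivative (\<lambda>v. g x \<bullet> v)) (at x)) \<and>
     (\<forall>x. (g has_derivative (\<lambda>v. H x *v v)) (at x)) \<and>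
     continuous_on UNIV H"

definition avg_int :: "('a::euclidean_space) set \<Rightarrow> ('a \<Rightarrow> real) \<Rightarrow> real" where
  "avg_int B f = (LINT x:B|lebesgue. f x) / measure lebesgue B"

text \<open>T in L^q_loc (as an a.e. defined function t).\<close>
definition Lloc :: "real \<Rightarrow> ('a::euclidean_space \<Rightarrow> 'b::real_normed_vector) \<Rightarrow> bool" where
  "Lloc q t \<longleftrightarrow> t \<in> borel_measurable lebesgue \<and>
     (\<forall>K. compact K \<longrightarrow> set_integrable lebesgue K (\<lambda>x. norm (t x) powr q))"

end

theory Submission
  imports Defs
begin

(* Fix x with u(x) = t x - A x - b nonzero and T x = {t x}. For y different from x,
   h-monotonicity says that a mixed second difference of h with increments y - x and
   t y - t x is nonnegative; two mean value arguments and the (p - 2)-homogeneity of the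
   Hessian turn this into  <D^2 h(e) (y - x), t y - t x> >= 0  for some unit vector e.
   Writing t y - t x = A (y - x) + u(y) - u(x) and using lam <= D^2 h(e) <= Lam, this forces
   |u(y)| >= lam/(6 Lam) |u(x)| on the ball of radius kappa * rho around x + rho u(x)/|u(x)|,
   where kappa = lam/(2 Lam) and rho = min((1 - beta) R/2, lam |u(x)|/(9 Lam (M + 1))).
   That ball lies in B_R(x0), so the average of |u|^(p-1) over B_R(x0) is at least
   (lam/(6 Lam) |u(x)|)^(p-1) (kappa rho/R)^n. Solving this for |u(x)| in the two cases for
   rho gives the two bounds. *)

lemma has_real_derivative_along_line:
  fixes f :: "'a::real_normed_vector \<Rightarrow> real"
  assumes "\<And>x. (f has_derivative f' x) (at x)"
  shows "((\<lambda>t. f (c + t *\<^sub>R d)) has_real_derivative f' (c + t *\<^sub>R d) d) (at t)"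
proof -
  have "((\<lambda>t. c + t *\<^sub>R d) has_derivative (\<lambda>s. s *\<^sub>R d)) (at t)"
    by (auto intro!: derivative_eq_intros)
  have "f' y (s *\<^sub>R d) = s * f' y d" for y s
    using linear_cmul[OF bounded_linear.linear[OF has_derivative_bounded_linear[OF assms]]] by simp
  with diff_chain_at[OF \<open>((\<lambda>t. c + t *\<^sub>R d) has_derivative _) _\<close> assms] show ?thesis
    unfolding has_field_derivative_def
    by (simp add: o_def) (erule has_derivative_eq_rhs, simp add: fun_eq_iff)
qed

lemma C2_withD:
  assumes "C2_with h g H"
  shows "(h has_derivative (\<lambda>v. g x \<bullet> v)) (at x)"
    and "((\<lambda>x. g x \<bullet> w) has_derivative (\<lambda>v. (H x *v v) \<bullet> w)) (at x)"
    and "continuous_on UNIV H"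
  using assms unfolding C2_with_def by (auto intro!: derivative_eq_intros)

lemma mixed_difference_mvt:
  assumes "C2_with h g H"
  shows "\<exists>t\<in>{0<..<1}. h (a + v + w) - h (a + v) - h (a + w) + h a
           = g (a + t *\<^sub>R w + v) \<bullet> w - g (a + t *\<^sub>R w) \<bullet> w"
proof -
  define \<phi> where "\<phi> t = h (a + v + t *\<^sub>R w) - h (a + t *\<^sub>R w)" for t
  have "(\<phi> has_real_derivative g (a + v + t *\<^sub>R w) \<bullet> w - g (a + t *\<^sub>R w) \<bullet> w) (at t)" for t
    unfolding \<phi>_def by (intro derivative_intros has_real_derivative_along_line C2_withD(1)[OF assms])
  from MVT2[of 0 1 \<phi>, OF _ this] show ?thesis
    by (auto simp: \<phi>_def algebra_simps)
qed

lemma mixed_difference_hessian: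
  assumes "C2_with h g H"
  shows "\<exists>z. norm (z - a) \<le> norm v + norm w \<and>
           h (a + v + w) - h (a + v) - h (a + w) + h a = (H z *v v) \<bullet> w"
proof -
  obtain t where t: "0 < t" "t < 1"
    and diff: "h (a + v + w) - h (a + v) - h (a + w) + h a
                 = g (a + t *\<^sub>R w + v) \<bullet> w - g (a + t *\<^sub>R w) \<bullet> w"
    using mixed_difference_mvt[OF assms, of a v w] by auto
  define \<psi> where "\<psi> s = g (a + t *\<^sub>R w + s *\<^sub>R v) \<bullet> w" for s
  have "(\<psi> has_real_derivative (H (a + t *\<^sub>R w + s *\<^sub>R v) *v v) \<bullet> w) (at s)" for s
    unfolding \<psi>_def by (rule has_real_derivative_along_line[OF C2_withD(2)[OF assms]])
  from MVT2[of 0 1 \<psi>, OF _ this] obtain s where s: "0 < s" "s < 1"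
    and "\<psi> 1 - \<psi> 0 = (H (a + t *\<^sub>R w + s *\<^sub>R v) *v v) \<bullet> w"
    by auto
  with diff have "h (a + v + w) - h (a + v) - h (a + w) + h a = (H (a + t *\<^sub>R w + s *\<^sub>R v) *v v) \<bullet> w"
    by (simp add: \<psi>_def)
  moreover have "norm (t *\<^sub>R w + s *\<^sub>R v) \<le> norm v + norm w"
    using norm_triangle_ineq[of "t *\<^sub>R w" "s *\<^sub>R v"] t s
      mult_left_le_one_le[of "norm w" t] mult_left_le_one_le[of "norm v" s] by simp
  ultimately show ?thesis
    by (metis add.assoc add_diff_cancel_left')
qed

lemma scaled_mixed_difference_hessian:
  assumes "C2_with h g H"
  obtains z where "\<And>s. norm (z s - x) \<le> \<bar>s\<bar> * (norm v + norm w)"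
    and "\<And>s. h (x + s *\<^sub>R v + s *\<^sub>R w) - h (x + s *\<^sub>R v) - h (x + s *\<^sub>R w) + h x
               = s\<^sup>2 * ((H (z s) *v v) \<bullet> w)"
proof -
  have "\<exists>z. norm (z - x) \<le> \<bar>s\<bar> * (norm v + norm w) \<and>
      h (x + s *\<^sub>R v + s *\<^sub>R w) - h (x + s *\<^sub>R v) - h (x + s *\<^sub>R w) + h x = s\<^sup>2 * ((H z *v v) \<bullet> w)"
    for s using mixed_difference_hessian[OF assms, of x "s *\<^sub>R v" "s *\<^sub>R w"]
    by (simp add: matrix_vector_mult_scaleR distrib_left power2_eq_square mult.assoc)
  then show thesis
    using that by metis
qed

lemma tendsto_at_0_of_norm_le_abs:
  fixes z :: "real \<Rightarrow> 'a::real_normed_vector"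
  assumes "\<And>s. norm (z s - x) \<le> \<bar>s\<bar> * c"
  shows "(z \<longlongrightarrow> x) (at 0)"
proof -
  have "((\<lambda>s. \<bar>s\<bar> * c) \<longlongrightarrow> 0) (at 0)"
    by (auto intro!: tendsto_eq_intros)
  then have "((\<lambda>s. z s - x) \<longlongrightarrow> 0) (at 0)"
    by (rule Lim_null_comparison[rotated]) (use assms in auto)
  then show ?thesis
    by (simp add: LIM_zero_iff)
qed

text \<open>Both Hessian values are limits of the same rescaled second difference.\<close>
lemma hessian_symmetric:
  assumes "C2_with h g H"
  shows "(H x *v v) \<bullet> w = (H x *v w) \<bullet> v"
proof -
  obtain z1 where z1: "\<And>s. norm (z1 s - x) \<le> \<bar>s\<bar> * (norm v + norm w)"
    "\<And>s. h (x + s *\<^sub>R v + s *\<^sub>R w) - h (x + s *\<^sub>R v) - h (x + s *\<^sub>R w) + h x = s\<^sup>2 * ((H (z1 s) *v v) \<bullet> w)"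
    by (rule scaled_mixed_difference_hessian[OF assms, where x = x and v = v and w = w]) blast
  obtain z2 where z2: "\<And>s. norm (z2 s - x) \<le> \<bar>s\<bar> * (norm w + norm v)"
    "\<And>s. h (x + s *\<^sub>R w + s *\<^sub>R v) - h (x + s *\<^sub>R w) - h (x + s *\<^sub>R v) + h x = s\<^sup>2 * ((H (z2 s) *v w) \<bullet> v)"
    by (rule scaled_mixed_difference_hessian[OF assms, where x = x and v = w and w = v]) blast
  have cont: "isCont (\<lambda>z. (H z *v a) \<bullet> b) x" for a b
    using C2_withD(3)[OF assms]
    by (auto simp: continuous_on_eq_continuous_at matrix_vector_mult_def inner_vec_def intro!: continuous_intros)
  have "((\<lambda>s. (H (z1 s) *v v) \<bullet> w) \<longlongrightarrow> (H x *v v) \<bullet> w) (at 0)"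
    by (rule isCont_tendsto_compose[OF cont tendsto_at_0_of_norm_le_abs[OF z1(1)]])
  moreover have "((\<lambda>s. (H (z1 s) *v v) \<bullet> w) \<longlongrightarrow> (H x *v w) \<bullet> v) (at 0)"
  proof (rule Lim_transform_eventually)
    show "((\<lambda>s. (H (z2 s) *v w) \<bullet> v) \<longlongrightarrow> (H x *v w) \<bullet> v) (at 0)"
      by (rule isCont_tendsto_compose[OF cont tendsto_at_0_of_norm_le_abs[OF z2(1)]])
    have "(H (z2 s) *v w) \<bullet> v = (H (z1 s) *v v) \<bullet> w" if "s \<noteq> 0" for s
      using z1(2)[of s] z2(2)[of s] that by (simp add: algebra_simps)
    then show "\<forall>\<^sub>F s in at 0. (H (z2 s) *v w) \<bullet> v = (H (z1 s) *v v) \<bullet> w"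
      by (auto simp: eventually_at_filter)
  qed
  ultimately show ?thesis
    by (rule tendsto_unique[OF trivial_limit_at])
qed

lemma MVT_nonneg_derivative_avoiding:
  assumes "\<And>s. (f has_real_derivative f' s) (at s)" and "f 0 \<le> f 1"
  shows "\<exists>s\<in>{0<..<1}. s \<noteq> s0 \<and> 0 \<le> f' s"
proof (cases "s0 \<in> {0<..<1}")
  case True
  obtain s1 where s1: "0 < s1" "s1 < s0" "f s0 - f 0 = s0 * f' s1"
    using MVT2[of 0 s0 f f', OF _ assms(1)] True by auto
  obtain s2 where s2: "s0 < s2" "s2 < 1" "f 1 - f s0 = (1 - s0) * f' s2"
    using MVT2[of s0 1 f f', OF _ assms(1)] True by auto
  have "0 \<le> f' s1 \<or> 0 \<le> f' s2"
  proof (rule ccontr)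
    assume "\<not> ?thesis"
    then have "s0 * f' s1 < 0" "(1 - s0) * f' s2 < 0"
      using True by (auto simp: mult_pos_neg)
    with s1(3) s2(3) assms(2) show False
      by linarith
  qed
  then show ?thesis
  proof
    assume "0 \<le> f' s1"
    with s1 True show ?thesis
      by (intro bexI[of _ s1]) auto
  next
    assume "0 \<le> f' s2"
    with s2 True show ?thesis
      by (intro bexI[of _ s2]) auto
  qed
next
  case False
  obtain s where "0 < s" "s < 1" "f 1 - f 0 = f' s"
    using MVT2[of 0 1 f f', OF _ assms(1)] by auto
  with False assms(2) show ?thesis
    by (intro bexI[of _ s]) auto
qed

text \<open>The Hessian is evaluated off the origin: for homogeneous \<open>h\<close> its value at \<open>0\<close> says
  nothing about its values on the unit sphere.\<close>
lemma mixed_difference_nonneg_hessian: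
  assumes "C2_with h g H" and "v \<noteq> 0"
    and "0 \<le> h (a + v + w) - h (a + v) - h (a + w) + h a"
  shows "\<exists>z. z \<noteq> 0 \<and> 0 \<le> (H z *v v) \<bullet> w"
proof -
  obtain t where diff: "h (a + v + w) - h (a + v) - h (a + w) + h a
                    = g (a + t *\<^sub>R w + v) \<bullet> w - g (a + t *\<^sub>R w) \<bullet> w"
    using mixed_difference_mvt[OF assms(1), of a v w] by auto
  define c where "c = a + t *\<^sub>R w"
  define \<psi> where "\<psi> s = g (c + s *\<^sub>R v) \<bullet> w" for s
  have "(\<psi> has_real_derivative (H (c + s *\<^sub>R v) *v v) \<bullet> w) (at s)" for s
    unfolding \<psi>_def by (rule has_real_derivative_along_line[OF C2_withD(2)[OF assms(1)]])
  moreover have "\<psi> 0 \<le> \<psi> 1"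
    using assms(3) diff by (simp add: \<psi>_def c_def add_ac)
  \<comment> \<open>\<open>- (c \<bullet> v) / (v \<bullet> v)\<close> is the only parameter at which the line \<open>c + s *\<^sub>R v\<close> can hit \<open>0\<close>\<close>
  ultimately have "\<exists>s\<in>{0<..<1}. s \<noteq> - (c \<bullet> v) / (v \<bullet> v) \<and> 0 \<le> (H (c + s *\<^sub>R v) *v v) \<bullet> w"
    by (rule MVT_nonneg_derivative_avoiding)
  then obtain s where s: "s \<noteq> - (c \<bullet> v) / (v \<bullet> v)" "0 \<le> (H (c + s *\<^sub>R v) *v v) \<bullet> w"
    by blast
  have "c + s *\<^sub>R v \<noteq> 0"
  proof
    assume "c + s *\<^sub>R v = 0"
    then have "c \<bullet> v + s * (v \<bullet> v) = 0"
      by (metis inner_add_left inner_scaleR_left inner_zero_left)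
    with s(1) assms(2) show False
      by (simp add: field_simps)
  qed
  with s(2) show ?thesis
    by blast
qed

lemma has_derivative_homogeneous:
  fixes f :: "'a::real_normed_vector \<Rightarrow> 'b::real_normed_vector"
  assumes "\<And>x. (f has_derivative f' x) (at x)" and "\<And>x. f (s *\<^sub>R x) = c *\<^sub>R f x"
  shows "f' (s *\<^sub>R x) (s *\<^sub>R v) = c *\<^sub>R f' x v"
proof -
  have "((\<lambda>y. s *\<^sub>R y) has_derivative (\<lambda>v. s *\<^sub>R v)) (at x)"
    by (auto intro!: derivative_eq_intros)
  from diff_chain_at[OF this assms(1)]
  have "((\<lambda>y. f (s *\<^sub>R y)) has_derivative (\<lambda>v. f' (s *\<^sub>R x) (s *\<^sub>R v))) (at x)"
    by (simp add: o_def)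
  moreover have "((\<lambda>y. f (s *\<^sub>R y)) has_derivative (\<lambda>v. c *\<^sub>R f' x v)) (at x)"
    unfolding assms(2) by (intro derivative_intros assms(1))
  ultimately show ?thesis
    by (metis has_derivative_unique)
qed

lemma gradient_homogeneous:
  assumes "C2_with h g H" and "\<forall>s>0. \<forall>x. h (s *\<^sub>R x) = s powr p * h x" and "s > 0"
  shows "g (s *\<^sub>R x) = s powr (p - 1) *\<^sub>R g x"
proof -
  have scaled: "g (s *\<^sub>R x) \<bullet> (s *\<^sub>R v) = s powr p * (g x \<bullet> v)" for v
    using has_derivative_homogeneous[of h "\<lambda>x v. g x \<bullet> v", OF C2_withD(1)[OF assms(1)]] assms(2,3)
    by simp
  have "g (s *\<^sub>R x) \<bullet> v = (s powr p / s) *\<^sub>R g x \<bullet> v" for v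
    using scaled[of "v /\<^sub>R s"] \<open>s > 0\<close> by (simp add: divide_inverse mult_ac)
  moreover have "s powr p / s = s powr (p - 1)"
    using powr_diff[of s p 1] \<open>s > 0\<close> by simp
  ultimately show ?thesis
    by (metis vector_eq_rdot)
qed

lemma hessian_homogeneous:
  assumes "C2_with h g H" and "\<forall>s>0. \<forall>x. h (s *\<^sub>R x) = s powr p * h x" and "s > 0"
  shows "H (s *\<^sub>R x) *v v = s powr (p - 2) *\<^sub>R (H x *v v)"
proof -
  have "H (s *\<^sub>R x) *v (s *\<^sub>R w) = s powr (p - 1) *\<^sub>R (H x *v w)" for w
    using has_derivative_homogeneous[of g "\<lambda>x v. H x *v v"] assms gradient_homogeneous[OF assms]
    unfolding C2_with_def by blast
  from this[of "v /\<^sub>R s"] have "H (s *\<^sub>R x) *v v = (s powr (p - 1) / s) *\<^sub>R (H x *v v)"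
    using \<open>s > 0\<close> by (simp add: matrix_vector_mult_scaleR divide_inverse)
  moreover have "s powr (p - 1) / s = s powr (p - 2)"
    using powr_diff[of s "p - 1" 1] \<open>s > 0\<close> by simp
  ultimately show ?thesis
    by simp
qed

lemma h_monotone_hessian_unit:
  assumes "C2_with h g H" and "\<forall>s>0. \<forall>x. h (s *\<^sub>R x) = s powr p * h x"
    and "h_monotone h T" and "\<xi> \<in> T x" and "\<zeta> \<in> T y" and "y \<noteq> x"
  shows "\<exists>e. norm e = 1 \<and> 0 \<le> (H e *v (y - x)) \<bullet> (\<zeta> - \<xi>)"
proof -
  have "h (x - \<xi>) + h (y - \<zeta>) \<le> h (x - \<zeta>) + h (y - \<xi>)"
    using assms(3-5) by (auto simp: h_monotone_def)
  then have mixed: "0 \<le> h ((x - \<zeta>) + (y - x) + (\<zeta> - \<xi>)) - h ((x - \<zeta>) + (y - x))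
                 - h ((x - \<zeta>) + (\<zeta> - \<xi>)) + h (x - \<zeta>)"
    by (simp add: algebra_simps)
  then obtain z where "z \<noteq> 0" "0 \<le> (H z *v (y - x)) \<bullet> (\<zeta> - \<xi>)"
    using mixed_difference_nonneg_hessian[OF assms(1) _ mixed] assms(6) by auto
  moreover have "H z *v (y - x) = norm z powr (p - 2) *\<^sub>R (H (z /\<^sub>R norm z) *v (y - x))"
    using hessian_homogeneous[OF assms(1,2), of "norm z" "z /\<^sub>R norm z"] \<open>z \<noteq> 0\<close> by simp
  ultimately show ?thesis
    by (intro exI[of _ "z /\<^sub>R norm z"]) (simp add: zero_le_mult_iff)
qed

lemma norm_matrix_vector_le_quadratic_form_bound:
  fixes Q :: "real^'n^'n"
  assumes sym: "\<And>v w. (Q *v v) \<bullet> w = (Q *v w) \<bullet> v"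
    and nonneg: "\<And>v. 0 \<le> (Q *v v) \<bullet> v"
    and upper: "\<And>v. (Q *v v) \<bullet> v \<le> L * (norm v)\<^sup>2"
  shows "norm (Q *v v) \<le> L * norm v"
proof -
  have L: "0 \<le> L" if "v \<noteq> 0"
    using order_trans[OF nonneg[of v] upper[of v]] mult_neg_pos[of L "(norm v)\<^sup>2"] that
    by force
  show ?thesis
  proof (cases "Q *v v = 0")
    case True
    with L show ?thesis
      by (cases "v = 0") auto
  next
    case False
    then have "v \<noteq> 0"
      by auto
    with L have L: "0 \<le> L"
      by blast
    define w where "w = (norm v / norm (Q *v v)) *\<^sub>R (Q *v v)"
    have norm_w: "norm w = norm v"
      using False by (simp add: w_def)
    \<comment> \<open>polarization of the quadratic form\<close>
    have "4 * (norm v * norm (Q *v v)) = 4 * ((Q *v v) \<bullet> w)"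
      using False by (simp add: w_def power2_norm_eq_inner[symmetric] power2_eq_square)
    also have "\<dots> = (Q *v (v + w)) \<bullet> (v + w) - (Q *v (v - w)) \<bullet> (v - w)"
      using sym[of w v]
      by (simp add: matrix_vector_right_distrib matrix_vector_mult_diff_distrib inner_add_left
          inner_add_right inner_diff_left inner_diff_right)
    also have "\<dots> \<le> L * (norm (v + w))\<^sup>2"
      using nonneg[of "v - w"] upper[of "v + w"] by linarith
    also have "\<dots> \<le> L * (2 * norm v)\<^sup>2"
      using norm_triangle_ineq[of v w] norm_w L by (intro mult_left_mono power_mono) auto
    also have "\<dots> = 4 * (norm v * (L * norm v))"
      by (simp add: power2_eq_square algebra_simps)
    finally have "norm v * norm (Q *v v) \<le> norm v * (L * norm v)"
      by simp
    then show ?thesis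
      by (rule mult_left_le_imp_le) (use \<open>v \<noteq> 0\<close> in simp)
  qed
qed

lemma ball_subset_ball_shifted:
  fixes x0 x e :: "'a::euclidean_space"
  assumes "dist x0 x < \<beta> * R" and "\<beta> < 1" and "0 < R" and "norm e = 1"
    and "0 \<le> \<rho>" and "\<rho> \<le> (1 - \<beta>) / 2 * R" and "\<kappa> \<le> 1 / 2"
  shows "ball (x + \<rho> *\<^sub>R e) (\<kappa> * \<rho>) \<subseteq> ball x0 R"
proof -
  have "dist (x + \<rho> *\<^sub>R e) x0 \<le> \<rho> + dist x0 x"
    using dist_triangle2[of "x + \<rho> *\<^sub>R e" x0 x] assms(4,5) by (simp add: dist_norm)
  moreover have "\<kappa> * \<rho> \<le> 1 / 2 * \<rho>"
    using mult_right_mono[OF assms(7,5)] .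
  moreover have "\<beta> * R < R" and "(1 - \<beta>) / 2 * R = R / 2 - \<beta> * R / 2"
    using assms(2,3) by (auto simp: field_simps)
  ultimately have "dist (x + \<rho> *\<^sub>R e) x0 + \<kappa> * \<rho> \<le> R"
    using assms(1,6) by linarith
  then show ?thesis
    by (simp add: ball_subset_ball_iff)
qed

lemma set_integral_ge_measure_mult:
  fixes f :: "'a::euclidean_space \<Rightarrow> real"
  assumes int: "set_integrable lebesgue B f" and nonneg: "\<And>x. x \<in> B \<Longrightarrow> 0 \<le> f x"
    and S: "S \<in> lmeasurable" "S \<subseteq> B"
    and lower: "AE y in lebesgue. y \<in> S \<longrightarrow> k \<le> f y"
  shows "k * measure lebesgue S \<le> (LINT x:B|lebesgue. f x)"
proof -
  have S_sets: "S \<in> sets lebesgue" and S_finite: "emeasure lebesgue S < \<infinity>"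
    using S(1) by (auto simp: fmeasurable_def)
  have int_S: "set_integrable lebesgue S f"
    by (rule set_integrable_subset[OF int S_sets S(2)])
  have "k * measure lebesgue S = (LINT x:S|lebesgue. k)"
    using S_sets S_finite by (simp add: set_integral_const)
  also have "\<dots> \<le> (LINT x:S|lebesgue. f x)"
  proof (rule set_integral_mono_AE[OF _ int_S])
    show "set_integrable lebesgue S (\<lambda>_. k)"
      using S_sets S_finite unfolding set_integrable_def
      by (intro integrable_scaleR_left integrable_real_indicator)
  qed (use lower in auto)
  also have "\<dots> \<le> (LINT x:B|lebesgue. f x)"
    unfolding set_lebesgue_integral_def
  proof (rule integral_mono)
    show "integrable lebesgue (\<lambda>x. indicator S x *\<^sub>R f x)"
      using int_S by (simp add: set_integrable_def)
    show "integrable lebesgue (\<lambda>x. indicator B x *\<^sub>R f x)"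
      using int by (simp add: set_integrable_def)
    show "indicator S x *\<^sub>R f x \<le> indicator B x *\<^sub>R f x" for x
      using S(2) nonneg[of x] by (auto simp: indicator_def)
  qed
  finally show ?thesis .
qed

lemma avg_int_ball_ge_subball:
  fixes f :: "real^'n \<Rightarrow> real"
  assumes "set_integrable lebesgue (ball x0 R) f" and "\<And>x. 0 \<le> f x"
    and "ball c r \<subseteq> ball x0 R" and "0 \<le> r" and "0 < R"
    and "AE y in lebesgue. y \<in> ball c r \<longrightarrow> k \<le> f y"
  shows "k * (r / R) ^ CARD('n) \<le> avg_int (ball x0 R) f"
proof -
  define \<omega> where "\<omega> = measure lebesgue (ball (0::real^'n) 1)"
  have "\<omega> > 0"
    using content_ball_pos[of 1 "0::real^'n"] by (simp add: \<omega>_def)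
  have "k * r ^ CARD('n) * \<omega> \<le> (LINT x:ball x0 R|lebesgue. f x)"
    using set_integral_ge_measure_mult[OF assms(1) _ _ assms(3,6)] assms(2,4)
      content_ball_conv_unit_ball[OF assms(4), of c]
    by (simp add: \<omega>_def mult.assoc)
  moreover have "measure lebesgue (ball x0 R) = R ^ CARD('n) * \<omega>"
    using content_ball_conv_unit_ball[of R x0] assms(5) by (simp add: \<omega>_def)
  ultimately show ?thesis
    using \<open>\<omega> > 0\<close> assms(5)
    by (simp add: avg_int_def power_divide field_simps)
qed

lemma powr_norm_diff_le:
  fixes a c :: "'a::real_normed_vector"
  assumes "norm c \<le> C" and "0 \<le> q"
  shows "norm (a - c) powr q \<le> 2 powr q * (norm a powr q + C powr q)"
proof -
  have "0 \<le> C"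
    using assms(1) norm_ge_zero order_trans by blast
  have "norm (a - c) \<le> 2 * max (norm a) C"
    using norm_triangle_ineq4[of a c] assms(1) by simp
  then have "norm (a - c) powr q \<le> (2 * max (norm a) C) powr q"
    using assms(2) by (intro powr_mono2) auto
  also have "\<dots> = 2 powr q * max (norm a) C powr q"
    using \<open>0 \<le> C\<close> by (simp add: powr_mult)
  also have "\<dots> \<le> 2 powr q * (norm a powr q + C powr q)"
    by (intro mult_left_mono) (auto simp: max_def)
  finally show ?thesis .
qed

lemma set_integrable_norm_affine_residual_powr:
  fixes t :: "real^'n \<Rightarrow> real^'n" and A :: "real^'n^'n"
  assumes "Lloc q t" and "0 \<le> q"
  shows "set_integrable lebesgue (ball x0 R) (\<lambda>x. norm (t x - A *v x - b) powr q)"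
proof -
  have t_meas[measurable]: "t \<in> borel_measurable lebesgue"
    using assms(1) by (simp add: Lloc_def)
  have "(\<lambda>x. A *v x) \<in> borel_measurable lborel"
    by (simp add: borel_measurable_continuous_onI linear_continuous_on matrix_vector_mul_bounded_linear)
  then have [measurable]: "(\<lambda>x. A *v x) \<in> borel_measurable lebesgue"
    by (rule measurable_completion)
  have [measurable]: "Measurable.pred lebesgue (\<lambda>x. x \<in> ball x0 R)"
    unfolding pred_def using lmeasurable_ball[of x0 R] by (simp add: fmeasurable_def)
  have "set_integrable lebesgue (cball x0 R) (\<lambda>x. norm (t x) powr q)"
    using assms(1) by (simp add: Lloc_def)
  then have int_t: "set_integrable lebesgue (ball x0 R) (\<lambda>x. norm (t x) powr q)"
    by (rule set_integrable_subset) auto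
  define c where "c = onorm (\<lambda>v. A *v v) * (norm x0 + R) + norm b"
  have affine_bound: "norm (A *v x + b) \<le> c" if "x \<in> ball x0 R" for x
  proof -
    have "norm x \<le> norm x0 + R"
      using that norm_triangle_ineq2[of x x0] by (simp add: dist_norm norm_minus_commute)
    then have "norm (A *v x) \<le> onorm (\<lambda>v. A *v v) * (norm x0 + R)"
      using onorm[OF matrix_vector_mul_bounded_linear[of A], of x]
        onorm_pos_le[OF matrix_vector_mul_bounded_linear[of A]]
      by (meson mult_left_mono order_trans)
    then show ?thesis
      unfolding c_def using norm_triangle_ineq[of "A *v x" b] by linarith
  qed
  have bound: "norm (t x - A *v x - b) powr q \<le> 2 powr q * (norm (t x) powr q + c powr q)"
    if "x \<in> ball x0 R" for x
    using powr_norm_diff_le[OF affine_bound[OF that] assms(2), of "t x"] by (simp add: diff_diff_eq)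
  have "set_integrable lebesgue (ball x0 R) (\<lambda>x. 2 powr q * (norm (t x) powr q + c powr q))"
  proof -
    have "set_integrable lebesgue (ball x0 R) (\<lambda>x. c powr q)"
      unfolding set_integrable_def
      by (intro integrable_scaleR_left integrable_real_indicator)
        (auto simp: emeasure_lborel_ball_finite[unfolded infinity_ennreal_def])
    with int_t show ?thesis
      by (intro set_integrable_mult_right set_integral_add(1))
  qed
  then show ?thesis
  proof (rule set_integrable_bound)
    show "set_borel_measurable lebesgue (ball x0 R) (\<lambda>x. norm (t x - A *v x - b) powr q)"
      unfolding set_borel_measurable_def by measurable
    show "AE x in lebesgue. x \<in> ball x0 R \<longrightarrow>
        norm (norm (t x - A *v x - b) powr q) \<le> norm (2 powr q * (norm (t x) powr q + c powr q))"
      using bound by (auto intro!: AE_I2 order_trans[OF _ abs_ge_self])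
  qed
qed

lemma le_powr_root_of_mult_powr_le:
  fixes c d e P :: real
  assumes "c * d powr e \<le> P" and "0 < c" and "0 < e" and "0 \<le> d"
  shows "d \<le> c powr (- 1 / e) * P powr (1 / e)"
proof -
  have "0 \<le> P"
    using assms(1,2) order_trans[OF _ assms(1)] by simp
  have "d = (d powr e) powr (1 / e)"
    using assms(3,4) by (simp add: powr_powr)
  also have "\<dots> \<le> (P / c) powr (1 / e)"
    using assms by (intro powr_mono2) (auto simp: field_simps)
  also have "\<dots> = P powr (1 / e) / c powr (1 / e)"
    using \<open>0 \<le> P\<close> assms(2) by (simp add: powr_divide)
  also have "\<dots> = c powr (- 1 / e) * P powr (1 / e)"
    by (simp add: powr_minus_divide powr_minus divide_inverse)
  finally show ?thesis .
qed

lemma dichotomy_of_min_bound: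
  fixes q c0 \<kappa> c1 \<gamma> P d :: real and n :: nat
  assumes "0 < q" and "0 < c0" and "0 < \<kappa>" and "0 < c1" and "0 < \<gamma>" and "0 < d"
    and bound: "(c0 * d) powr q * (\<kappa> * min \<gamma> (c1 * d)) ^ n \<le> P"
  shows "d \<le> (c0 powr q * (\<kappa> * c1) ^ n) powr (- 1 / (n + q)) * P powr (1 / (n + q)) \<or>
         d \<le> (c0 powr q * \<kappa> ^ n) powr (- 1 / q) * \<gamma> powr (- real n / q) * P powr (1 / q)"
proof (cases "c1 * d \<le> \<gamma>")
  case True
  have "(c0 * d) powr q * (\<kappa> * (c1 * d)) ^ n = (c0 powr q * (\<kappa> * c1) ^ n) * d powr (n + q)"
    using assms by (simp add: powr_mult powr_add powr_realpow power_mult_distrib mult_ac)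
  with bound True have "(c0 powr q * (\<kappa> * c1) ^ n) * d powr (n + q) \<le> P"
    by simp
  then show ?thesis
    using assms by (intro disjI1 le_powr_root_of_mult_powr_le) auto
next
  case False
  have "(c0 * d) powr q * (\<kappa> * \<gamma>) ^ n = (c0 powr q * \<kappa> ^ n * \<gamma> ^ n) * d powr q"
    using assms by (simp add: powr_mult power_mult_distrib mult_ac)
  with bound False have "(c0 powr q * \<kappa> ^ n * \<gamma> ^ n) * d powr q \<le> P"
    by simp
  then have "d \<le> (c0 powr q * \<kappa> ^ n * \<gamma> ^ n) powr (- 1 / q) * P powr (1 / q)"
    using assms by (intro le_powr_root_of_mult_powr_le) auto
  also have "(c0 powr q * \<kappa> ^ n * \<gamma> ^ n) powr (- 1 / q) = (c0 powr q * \<kappa> ^ n) powr (- 1 / q) * \<gamma> powr (- real n / q)"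
  proof -
    have "(\<gamma> ^ n) powr (- 1 / q) = \<gamma> powr (- real n / q)"
      using assms(5) by (simp add: powr_realpow[symmetric] powr_powr)
    then show ?thesis
      using assms by (simp add: powr_mult)
  qed
  finally show ?thesis
    by blast
qed

text \<open>With \<open>N = n + q\<close> one has \<open>P powr (1/q) = P powr (1/N) * Y\<close> for \<open>Y = P powr (n/(q*N))\<close>;
  the threshold compares \<open>Y\<close> with \<open>\<gamma> powr (n/q)\<close>, and on either side of it one of the two
  alternatives dominates the other.\<close>
lemma two_regime_bound:
  fixes a b d P \<gamma> q :: real and n :: nat
  assumes "0 \<le> a" and "0 \<le> b" and "0 < \<gamma>" and "0 < q" and "0 \<le> P"
    and "d \<le> a * P powr (1 / (n + q)) \<or> d \<le> b * \<gamma> powr (- real n / q) * P powr (1 / q)"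
  shows "P powr (1 / q) \<le> \<gamma> powr ((n + q) / q) \<Longrightarrow> d \<le> (a + b) * P powr (1 / (n + q))"
    and "\<gamma> powr ((n + q) / q) \<le> P powr (1 / q) \<Longrightarrow> d \<le> (a + b) * \<gamma> powr (- real n / q) * P powr (1 / q)"
proof -
  define Y where "Y = P powr (n / (q * (n + q)))"
  have "0 < n + q"
    using assms(4) by simp
  have split: "P powr (1 / q) = P powr (1 / (n + q)) * Y"
  proof -
    have "1 / (n + q) + n / (q * (n + q)) = 1 / q"
      using assms(4) \<open>0 < n + q\<close> by (simp add: divide_simps)
    then show ?thesis
      unfolding Y_def by (metis powr_add)
  qed
  have Y_def': "Y = (P powr (1 / q)) powr (n / (n + q))"
    and \<gamma>_def': "\<gamma> powr (n / q) = (\<gamma> powr ((n + q) / q)) powr (n / (n + q))"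
    using assms(4) \<open>0 < n + q\<close> by (simp_all add: Y_def powr_powr)
  have \<gamma>: "\<gamma> powr (- real n / q) * \<gamma> powr (n / q) = 1"
    using assms(3) by (simp add: powr_minus_divide powr_minus divide_inverse)
  have nonneg: "0 \<le> a * P powr (1 / (n + q))" "0 \<le> b * P powr (1 / (n + q))"
    "0 \<le> a * \<gamma> powr (- real n / q) * P powr (1 / q)" "0 \<le> b * \<gamma> powr (- real n / q) * P powr (1 / q)"
    using assms(1,2) by simp_all
  show "d \<le> (a + b) * P powr (1 / (n + q))" if "P powr (1 / q) \<le> \<gamma> powr ((n + q) / q)"
  proof -
    have "Y \<le> \<gamma> powr (n / q)"
      unfolding Y_def' \<gamma>_def' using that assms(4) by (intro powr_mono2) auto
    then have "b * \<gamma> powr (- real n / q) * P powr (1 / q) \<le> b * \<gamma> powr (- real n / q) * (P powr (1 / (n + q)) * \<gamma> powr (n / q))"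
      unfolding split using assms(2) by (intro mult_left_mono) auto
    also have "\<dots> = b * P powr (1 / (n + q))"
      using \<gamma> by (simp add: mult_ac)
    finally show ?thesis
      using assms(6) nonneg by (simp add: distrib_right) linarith
  qed
  show "d \<le> (a + b) * \<gamma> powr (- real n / q) * P powr (1 / q)" if "\<gamma> powr ((n + q) / q) \<le> P powr (1 / q)"
  proof -
    have "\<gamma> powr (n / q) \<le> Y"
      unfolding Y_def' \<gamma>_def' using that assms(3,4) by (intro powr_mono2) auto
    have "a * P powr (1 / (n + q)) = a * \<gamma> powr (- real n / q) * (P powr (1 / (n + q)) * \<gamma> powr (n / q))"
      using \<gamma> by (simp add: mult_ac)
    also have "\<dots> \<le> a * \<gamma> powr (- real n / q) * P powr (1 / q)"
      unfolding split using \<open>\<gamma> powr (n / q) \<le> Y\<close> assms(1) by (intro mult_left_mono) auto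
    finally show ?thesis
      using assms(6) nonneg by (simp add: distrib_right) linarith
  qed
qed

definition two_regime_constant :: "real \<Rightarrow> nat \<Rightarrow> real \<Rightarrow> real \<Rightarrow> real \<Rightarrow> real" where
  "two_regime_constant q n c0 \<kappa> c1 =
    (c0 powr q * (\<kappa> * c1) ^ n) powr (- 1 / (n + q)) + (c0 powr q * \<kappa> ^ n) powr (- 1 / q)"

lemma two_regime_constant_pos:
  assumes "0 < c0" and "0 < \<kappa>" and "0 < c1"
  shows "0 < two_regime_constant q n c0 \<kappa> c1"
  using assms by (simp add: two_regime_constant_def add_pos_pos)

lemma min_bound_rescale:
  fixes c0 \<kappa> c1 \<gamma> R \<delta> q :: real
  assumes "0 < R" and "0 \<le> c0" and "0 \<le> \<delta>"
  shows "(c0 * \<delta>) powr q * (\<kappa> * min (\<gamma> * R) (c1 * \<delta>) / R) ^ n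
    = R powr q * ((c0 * (\<delta> / R)) powr q * (\<kappa> * min \<gamma> (c1 * (\<delta> / R))) ^ n)"
proof -
  have "\<kappa> * min (\<gamma> * R) (c1 * \<delta>) / R = \<kappa> * min \<gamma> (c1 * (\<delta> / R))"
    using assms(1) by (subst times_divide_eq_right[symmetric]) (simp add: min_divide_distrib_right)
  moreover have "(c0 * \<delta>) powr q = R powr q * (c0 * (\<delta> / R)) powr q"
    using assms by (simp add: powr_mult[symmetric])
  ultimately show ?thesis
    by simp
qed

lemma two_regime_bound_of_min_bound:
  fixes q c0 \<kappa> c1 \<gamma> R I \<delta> :: real and n :: nat
  assumes "0 < q" and "0 < c0" and "0 < \<kappa>" and "0 < c1" and "0 < \<gamma>" and "0 < R" and "0 \<le> \<delta>"
    and "(c0 * \<delta>) powr q * (\<kappa> * min (\<gamma> * R) (c1 * \<delta>) / R) ^ n \<le> I"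
  defines "K \<equiv> two_regime_constant q n c0 \<kappa> c1"
  shows "I powr (1 / q) \<le> \<gamma> powr ((n + q) / q) * R \<Longrightarrow>
           \<delta> \<le> K * R * (R powr (- q) * I) powr (1 / (n + q))"
    and "\<gamma> powr ((n + q) / q) * R \<le> I powr (1 / q) \<Longrightarrow>
           \<delta> \<le> K * \<gamma> powr (- real n / q) * R * (R powr (- q) * I) powr (1 / q)"
proof -
  define d where "d = \<delta> / R"
  define P where "P = R powr (- q) * I"
  have "0 \<le> d"
    using assms(6,7) by (simp add: d_def)
  have "R powr q * ((c0 * d) powr q * (\<kappa> * min \<gamma> (c1 * d)) ^ n) \<le> I"
    using assms(8) min_bound_rescale[OF assms(6) less_imp_le[OF assms(2)] assms(7)] by (simp add: d_def)
  then have min_bound: "(c0 * d) powr q * (\<kappa> * min \<gamma> (c1 * d)) ^ n \<le> P"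
    using assms(6) by (simp add: P_def powr_minus field_simps)
  moreover have "0 \<le> (c0 * d) powr q * (\<kappa> * min \<gamma> (c1 * d)) ^ n"
    using assms(3-5) \<open>0 \<le> d\<close> by simp
  ultimately have P: "0 \<le> P"
    by linarith
  have "d \<le> (c0 powr q * (\<kappa> * c1) ^ n) powr (- 1 / (n + q)) * P powr (1 / (n + q)) \<or>
      d \<le> (c0 powr q * \<kappa> ^ n) powr (- 1 / q) * \<gamma> powr (- real n / q) * P powr (1 / q)"
    using dichotomy_of_min_bound[OF assms(1-5) _ min_bound] \<open>0 \<le> d\<close> by (cases "d = 0") auto
  note regimes = two_regime_bound[OF powr_ge_zero powr_ge_zero assms(5,1) P this,
      folded two_regime_constant_def K_def]
  have "I = R powr q * P"
    using assms(6) by (simp add: P_def powr_minus)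
  then have "I powr (1 / q) = P powr (1 / q) * R"
    using assms(1,6) P by (simp add: powr_mult powr_powr mult.commute)
  then have threshold: "I powr (1 / q) \<le> C * R \<longleftrightarrow> P powr (1 / q) \<le> C"
    and threshold': "C * R \<le> I powr (1 / q) \<longleftrightarrow> C \<le> P powr (1 / q)" for C
    using assms(6) by (simp_all add: mult_le_cancel_right_pos)
  have scale: "\<delta> \<le> X * R" if "d \<le> X" for X
    using that assms(6) by (simp add: d_def pos_divide_le_eq)
  show "\<delta> \<le> K * R * (R powr (- q) * I) powr (1 / (n + q))"
    if "I powr (1 / q) \<le> \<gamma> powr ((n + q) / q) * R"
    using scale[OF regimes(1)[OF that[unfolded threshold]]] by (simp add: P_def mult_ac)
  show "\<delta> \<le> K * \<gamma> powr (- real n / q) * R * (R powr (- q) * I) powr (1 / q)"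
    if "\<gamma> powr ((n + q) / q) * R \<le> I powr (1 / q)"
    using scale[OF regimes(2)[OF that[unfolded threshold']]] by (simp add: P_def mult_ac)
qed

locale uniformly_convex_homogeneous =
  fixes h :: "real^'n \<Rightarrow> real" and g :: "real^'n \<Rightarrow> real^'n" and H :: "real^'n \<Rightarrow> real^'n^'n"
    and p lam Lam :: real
  assumes C2: "C2_with h g H"
    and homogeneous: "\<forall>s>0. \<forall>x. h (s *\<^sub>R x) = s powr p * h x"
    and hessian_bounds: "\<forall>x v. norm x = 1 \<longrightarrow>
      lam * (norm v)\<^sup>2 \<le> (H x *v v) \<bullet> v \<and> (H x *v v) \<bullet> v \<le> Lam * (norm v)\<^sup>2"
    and lam_pos: "0 < lam" and lam_le_Lam: "lam \<le> Lam"
begin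

lemma Lam_pos: "0 < Lam"
  using lam_pos lam_le_Lam by simp

lemma norm_hessian_unit_le:
  assumes "norm e = 1"
  shows "norm (H e *v v) \<le> Lam * norm v"
proof (rule norm_matrix_vector_le_quadratic_form_bound)
  show "(H e *v u) \<bullet> w = (H e *v w) \<bullet> u" for u w
    by (rule hessian_symmetric[OF C2])
  show "0 \<le> (H e *v u) \<bullet> u" for u
  proof -
    have "lam * (norm u)\<^sup>2 \<le> (H e *v u) \<bullet> u"
      using hessian_bounds assms by blast
    moreover have "0 \<le> lam * (norm u)\<^sup>2"
      using lam_pos by simp
    ultimately show ?thesis
      by linarith
  qed
  show "(H e *v u) \<bullet> u \<le> Lam * (norm u)\<^sup>2" for u
    using hessian_bounds assms by blast
qed

lemma hessian_inner_near_direction: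
  assumes "norm e = 1" and "norm e' = 1" and "0 \<le> \<rho>"
    and "norm (w - \<rho> *\<^sub>R e) \<le> lam / (2 * Lam) * \<rho>"
  shows "\<rho> * lam / 2 \<le> (H e' *v w) \<bullet> e"
proof -
  have "\<bar>(H e' *v e) \<bullet> (w - \<rho> *\<^sub>R e)\<bar> \<le> norm (H e' *v e) * norm (w - \<rho> *\<^sub>R e)"
    by (rule Cauchy_Schwarz_ineq2)
  also have "\<dots> \<le> Lam * (lam / (2 * Lam) * \<rho>)"
    using norm_hessian_unit_le[OF assms(2), of e] assms(1,4) Lam_pos
    by (intro mult_mono) auto
  also have "\<dots> = \<rho> * lam / 2"
    using Lam_pos by simp
  finally have "\<bar>(H e' *v e) \<bullet> (w - \<rho> *\<^sub>R e)\<bar> \<le> \<rho> * lam / 2" .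
  moreover have "\<rho> * lam \<le> \<rho> * ((H e' *v e) \<bullet> e)"
    using hessian_bounds[rule_format, OF assms(2), of e] assms(1,3) by (intro mult_left_mono) auto
  moreover have "(H e' *v w) \<bullet> e = \<rho> * ((H e' *v e) \<bullet> e) + (H e' *v e) \<bullet> (w - \<rho> *\<^sub>R e)"
    by (simp add: hessian_symmetric[OF C2, of e' w e] inner_diff_right)
  ultimately show ?thesis
    by linarith
qed

lemma lower_bound_from_hessian_pairing:
  assumes "norm e = 1" and "0 \<le> (H e *v w) \<bullet> (A *v w + V - U)"
    and "\<And>w. norm (A *v w) \<le> M * norm w" and "0 \<le> M"
    and "U \<noteq> 0" and "0 < \<rho>" and "norm (w - \<rho> *\<^sub>R sgn U) \<le> lam / (2 * Lam) * \<rho>"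
  shows "lam / (3 * Lam) * norm U \<le> 3 / 2 * M * \<rho> + norm V"
proof -
  have "lam / (2 * Lam) * \<rho> \<le> 1 / 2 * \<rho>"
    using lam_le_Lam Lam_pos assms(6) by (intro mult_right_mono) (auto simp: field_simps)
  moreover have "norm (\<rho> *\<^sub>R sgn U) = \<rho>"
    using assms(5,6) by (simp add: norm_sgn)
  ultimately have norm_w: "norm w \<le> 3 / 2 * \<rho>"
    using norm_triangle_sub[of w "\<rho> *\<^sub>R sgn U"] assms(7) by linarith
  have "norm U * (\<rho> * lam / 2) \<le> norm U * ((H e *v w) \<bullet> sgn U)"
    using hessian_inner_near_direction[of "sgn U" e \<rho> w] assms(1,5-7)
    by (intro mult_left_mono) (auto simp: norm_sgn)
  also have "\<dots> = (H e *v w) \<bullet> U"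
    by (simp add: sgn_div_norm assms(5))
  also have "\<dots> \<le> (H e *v w) \<bullet> (A *v w + V)"
    using assms(2) by (simp add: inner_diff_right)
  also have "\<dots> \<le> norm (H e *v w) * norm (A *v w + V)"
    by (rule Cauchy_Schwarz_ineq2[THEN abs_le_D1])
  also have "\<dots> \<le> (Lam * (3 / 2 * \<rho>)) * (M * (3 / 2 * \<rho>) + norm V)"
  proof (rule mult_mono)
    show "norm (H e *v w) \<le> Lam * (3 / 2 * \<rho>)"
      using order_trans[OF norm_hessian_unit_le[OF assms(1), of w] mult_left_mono[OF norm_w]] Lam_pos
      by simp
    show "norm (A *v w + V) \<le> M * (3 / 2 * \<rho>) + norm V"
      using norm_triangle_ineq[of "A *v w" V] assms(3)[of w] mult_left_mono[OF norm_w assms(4)]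
      by linarith
  qed (use Lam_pos assms(6) in auto)
  finally have "(3 / 2 * \<rho> * Lam) * (lam / (3 * Lam) * norm U)
      \<le> (3 / 2 * \<rho> * Lam) * (3 / 2 * M * \<rho> + norm V)"
    using Lam_pos by (simp add: field_simps)
  then show ?thesis
    by (rule mult_left_le_imp_le) (use Lam_pos assms(6) in simp)
qed

lemma h_monotone_residual_lower_bound:
  assumes "h_monotone h T" and "\<xi> \<in> T x" and "\<zeta> \<in> T y"
    and "\<And>w. norm (A *v w) \<le> M * norm w" and "0 \<le> M"
    and "\<xi> - A *v x - b \<noteq> 0" and "0 < \<rho>"
    and "\<rho> \<le> lam / (9 * Lam * (M + 1)) * norm (\<xi> - A *v x - b)"
    and "y \<in> ball (x + \<rho> *\<^sub>R sgn (\<xi> - A *v x - b)) (lam / (2 * Lam) * \<rho>)"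
  shows "lam / (6 * Lam) * norm (\<xi> - A *v x - b) \<le> norm (\<zeta> - A *v y - b)"
proof -
  have near: "norm ((y - x) - \<rho> *\<^sub>R sgn (\<xi> - A *v x - b)) < lam / (2 * Lam) * \<rho>"
    using assms(9) by (simp add: diff_diff_eq dist_commute dist_norm)
  have "lam / (2 * Lam) * \<rho> < \<rho>"
    using lam_le_Lam Lam_pos assms(7) by (simp add: field_simps)
  have "y \<noteq> x"
  proof
    assume "y = x"
    with near have "norm (\<rho> *\<^sub>R sgn (\<xi> - A *v x - b)) < lam / (2 * Lam) * \<rho>"
      by simp
    with \<open>lam / (2 * Lam) * \<rho> < \<rho>\<close> assms(6,7) show False
      by (simp add: norm_sgn)
  qed
  then obtain e where e: "norm e = 1" "0 \<le> (H e *v (y - x)) \<bullet> (\<zeta> - \<xi>)"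
    using h_monotone_hessian_unit[OF C2 homogeneous assms(1-3)] by blast
  have "\<zeta> - \<xi> = A *v (y - x) + (\<zeta> - A *v y - b) - (\<xi> - A *v x - b)"
    by (simp add: matrix_vector_mult_diff_distrib algebra_simps)
  with e have "0 \<le> (H e *v (y - x)) \<bullet> (A *v (y - x) + (\<zeta> - A *v y - b) - (\<xi> - A *v x - b))"
    by simp
  from lower_bound_from_hessian_pairing[OF e(1) this assms(4-7) less_imp_le[OF near]]
  have "lam / (3 * Lam) * norm (\<xi> - A *v x - b) \<le> 3 / 2 * M * \<rho> + norm (\<zeta> - A *v y - b)" .
  moreover have "3 / 2 * M * \<rho> \<le> 3 / 2 * (M + 1) * (lam / (9 * Lam * (M + 1)) * norm (\<xi> - A *v x - b))"
    using assms(5,7,8) by (intro mult_mono) auto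
  moreover have "\<dots> = lam / (6 * Lam) * norm (\<xi> - A *v x - b)"
    using assms(5) Lam_pos by (simp add: field_simps add_nonneg_eq_0_iff)
  ultimately show ?thesis
    by linarith
qed

lemma avg_int_residual_lower_bound:
  assumes "2 \<le> p" and "h_monotone h T" and "AE y in lebesgue. T y = {t y}" and "Lloc (p - 1) t"
    and "onorm (\<lambda>v. A *v v) = M" and "0 < R" and "0 < \<beta>" and "\<beta> < 1"
    and "x \<in> ball x0 (\<beta> * R)" and "t x \<in> T x"
  shows "(lam / (6 * Lam) * norm (t x - A *v x - b)) powr (p - 1) *
      (lam / (2 * Lam) * min ((1 - \<beta>) / 2 * R) (lam / (9 * Lam * (M + 1)) * norm (t x - A *v x - b)) / R)
        ^ CARD('n)
    \<le> avg_int (ball x0 R) (\<lambda>y. norm (t y - A *v y - b) powr (p - 1))"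
    (is "?lhs \<le> avg_int _ ?f")
proof (cases "t x - A *v x - b = 0")
  case True
  have "0 \<le> avg_int (ball x0 R) ?f"
    unfolding avg_int_def set_lebesgue_integral_def
    by (intro divide_nonneg_nonneg Bochner_Integration.integral_nonneg) auto
  with True show ?thesis
    by simp
next
  case False
  define U where "U = t x - A *v x - b"
  define \<rho> where "\<rho> = min ((1 - \<beta>) / 2 * R) (lam / (9 * Lam * (M + 1)) * norm U)"
  define \<kappa> where "\<kappa> = lam / (2 * Lam)"
  have M: "0 \<le> M" "\<And>w. norm (A *v w) \<le> M * norm w"
    using assms(5) onorm_pos_le[OF matrix_vector_mul_bounded_linear[of A]]
      onorm[OF matrix_vector_mul_bounded_linear[of A]] by auto
  have \<kappa>: "0 < \<kappa>" "\<kappa> \<le> 1 / 2"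
    using lam_pos lam_le_Lam by (auto simp: \<kappa>_def field_simps)
  have \<rho>: "0 < \<rho>"
    using False lam_pos Lam_pos M(1) assms(6,8) by (simp add: \<rho>_def U_def)
  have small_ball: "ball (x + \<rho> *\<^sub>R sgn U) (\<kappa> * \<rho>) \<subseteq> ball x0 R"
    using assms(6,8,9) \<rho> \<kappa>(2) False
    by (intro ball_subset_ball_shifted) (auto simp: \<rho>_def U_def norm_sgn)
  have "AE y in lebesgue. y \<in> ball (x + \<rho> *\<^sub>R sgn U) (\<kappa> * \<rho>) \<longrightarrow>
      (lam / (6 * Lam) * norm U) powr (p - 1) \<le> ?f y"
    using assms(3)
  proof (rule AE_mp, intro AE_I2 impI)
    fix y assume "T y = {t y}" and "y \<in> ball (x + \<rho> *\<^sub>R sgn U) (\<kappa> * \<rho>)"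
    then have "lam / (6 * Lam) * norm U \<le> norm (t y - A *v y - b)"
      using h_monotone_residual_lower_bound[OF assms(2,10) _ M(2,1) _ \<rho>] False
      by (simp add: U_def \<kappa>_def \<rho>_def)
    then show "(lam / (6 * Lam) * norm U) powr (p - 1) \<le> ?f y"
      using assms(1) lam_pos Lam_pos by (intro powr_mono2) auto
  qed
  moreover have "0 \<le> \<kappa> * \<rho>"
    using \<kappa> \<rho> by simp
  ultimately have "(lam / (6 * Lam) * norm U) powr (p - 1) * (\<kappa> * \<rho> / R) ^ CARD('n)
      \<le> avg_int (ball x0 R) ?f"
    using avg_int_ball_ge_subball[OF set_integrable_norm_affine_residual_powr[OF assms(4)] _ small_ball]
      assms(1,6) by simp
  then show ?thesis
    unfolding U_def \<rho>_def \<kappa>_def .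
qed

lemma residual_ae_bound:
  fixes b x0 :: "real^'n"
  assumes "2 \<le> p" and "h_monotone h T" and "AE y in lebesgue. T y = {t y}" and "Lloc (p - 1) t"
    and "onorm (\<lambda>v. A *v v) = M" and "0 < R" and "\<beta> \<in> {0<..<1}"
  defines "I \<equiv> avg_int (ball x0 R) (\<lambda>x. norm (t x - A *v x - b) powr (p - 1))"
    and "C \<equiv> ((1 - \<beta>) / 2) powr ((real CARD('n) + (p - 1)) / (p - 1))"
    and "K \<equiv> two_regime_constant (p - 1) CARD('n) (lam / (6 * Lam)) (lam / (2 * Lam)) (lam / (9 * Lam * (M + 1)))"
  shows "I powr (1 / (p - 1)) \<le> C * R \<Longrightarrow> AE x in lebesgue. x \<in> ball x0 (\<beta> * R) \<longrightarrow>
           norm (t x - A *v x - b) \<le> K * R * (R powr (- (p - 1)) * I) powr (1 / (real CARD('n) + p - 1))"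
    and "C * R \<le> I powr (1 / (p - 1)) \<Longrightarrow> AE x in lebesgue. x \<in> ball x0 (\<beta> * R) \<longrightarrow>
           norm (t x - A *v x - b)
             \<le> K * ((1 - \<beta>) / 2) powr (- real CARD('n) / (p - 1)) * R * (R powr (- (p - 1)) * I) powr (1 / (p - 1))"
proof -
  have "0 \<le> M"
    using assms(5) onorm_pos_le[OF matrix_vector_mul_bounded_linear[of A]] by simp
  then have positive: "0 < p - 1" "0 < lam / (6 * Lam)" "0 < lam / (2 * Lam)" "0 < lam / (9 * Lam * (M + 1))"
    "0 < (1 - \<beta>) / 2"
    using assms(1,7) lam_pos Lam_pos by auto
  have N: "real CARD('n) + p - 1 = real CARD('n) + (p - 1)"
    by simp
  note pointwise = two_regime_bound_of_min_bound[OF positive assms(6) norm_ge_zero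
      avg_int_residual_lower_bound[OF assms(1-6), where \<beta> = \<beta> and ?x0.0 = x0 and b = b],
      folded I_def C_def K_def N]
  show "AE x in lebesgue. x \<in> ball x0 (\<beta> * R) \<longrightarrow>
      norm (t x - A *v x - b) \<le> K * R * (R powr (- (p - 1)) * I) powr (1 / (real CARD('n) + p - 1))"
    if "I powr (1 / (p - 1)) \<le> C * R"
    using assms(3) by (rule AE_mp) (use pointwise(1) that assms(7) in auto)
  show "AE x in lebesgue. x \<in> ball x0 (\<beta> * R) \<longrightarrow> norm (t x - A *v x - b)
      \<le> K * ((1 - \<beta>) / 2) powr (- real CARD('n) / (p - 1)) * R * (R powr (- (p - 1)) * I) powr (1 / (p - 1))"
    if "C * R \<le> I powr (1 / (p - 1))"
    using assms(3) by (rule AE_mp) (use pointwise(2) that assms(7) in auto)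
qed

end

theorem theorem3p1:
  fixes p :: real
  assumes "p \<ge> 2"
  shows "\<exists>C :: real \<Rightarrow> real. (\<forall>\<beta>\<in>{0<..<1}. C \<beta> > 0) \<and>
    (\<forall>lam Lam M. 0 < lam \<and> lam \<le> Lam \<and> M \<ge> 0 \<longrightarrow>
      (\<exists>K1 > 0. \<forall>\<beta>\<in>{0<..<1}. \<exists>K2 > 0.
        \<forall>(h :: real^'n \<Rightarrow> real) g H (T :: real^'n \<Rightarrow> (real^'n) set) (t :: real^'n \<Rightarrow> real^'n)
          (A :: real^'n^'n) (b :: real^'n) x0 R.
          C2_with h g H \<and>
          (\<forall>x. h x \<ge> 0) \<and>
          (\<forall>s>0. \<forall>x. h (s *\<^sub>R x) = s powr p * h x) \<and>
          (\<forall>x v. norm x = 1 \<longrightarrow> lam * (norm v)\<^sup>2 \<le> (H x *v v) \<bullet> v \<and> (H x *v v) \<bullet> v \<le> Lam * (norm v)\<^sup>2) \<and>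
          h_monotone h T \<and>
          (AE x in lebesgue. T x = {t x}) \<and> Lloc (p - 1) t \<and>
          onorm (\<lambda>v. A *v v) = M \<and> R > 0
          \<longrightarrow>
          (let u = (\<lambda>x. t x - A *v x - b);
               I = avg_int (ball x0 R) (\<lambda>x. norm (u x) powr (p - 1));
               n = real CARD('n)
           in (I powr (1 / (p - 1)) \<le> C \<beta> * R \<longrightarrow>
                 (AE x in lebesgue. x \<in> ball x0 (\<beta> * R) \<longrightarrow>
                    norm (u x) \<le> K1 * R * (R powr (-(p - 1)) * I) powr (1 / (n + p - 1)))) \<and>
              (I powr (1 / (p - 1)) \<ge> C \<beta> * R \<longrightarrow>
                 (AE x in lebesgue. x \<in> ball x0 (\<beta> * R) \<longrightarrow>
                    norm (u x) \<le> K2 * R * (R powr (-(p - 1)) * I) powr (1 / (p - 1)))))))"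
proof (rule exI[of _ "\<lambda>\<beta>. ((1 - \<beta>) / 2) powr ((real CARD('n) + (p - 1)) / (p - 1))"],
    intro conjI ballI allI impI, goal_cases)
  case (1 \<beta>)
  then show ?case
    by simp
next
  case (2 lam Lam M)
  let ?K1 = "two_regime_constant (p - 1) CARD('n) (lam / (6 * Lam)) (lam / (2 * Lam)) (lam / (9 * Lam * (M + 1)))"
  show ?case
  proof (rule exI[of _ ?K1], intro conjI ballI, goal_cases)
    case 1
    show ?case
      using 2 by (simp add: two_regime_constant_pos)
  next
    case (2 \<beta>)
    show ?case
    proof (rule exI[of _ "?K1 * ((1 - \<beta>) / 2) powr (- real CARD('n) / (p - 1))"],
        intro conjI allI impI, goal_cases)
      case 1
      show ?case
        using \<open>0 < lam \<and> lam \<le> Lam \<and> 0 \<le> M\<close> \<open>\<beta> \<in> {0<..<1}\<close>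
        by (simp add: two_regime_constant_pos)
    next
      case (2 h g H T t A b x0 R)
      interpret uniformly_convex_homogeneous h g H p lam Lam
        using 2 \<open>0 < lam \<and> lam \<le> Lam \<and> 0 \<le> M\<close> by unfold_locales auto
      from 2 have "h_monotone h T" "AE x in lebesgue. T x = {t x}" "Lloc (p - 1) t"
        "onorm (\<lambda>v. A *v v) = M" "0 < R"
        by auto
      from residual_ae_bound[OF assms this \<open>\<beta> \<in> {0<..<1}\<close>] show ?case
        unfolding Let_def by blast
    qed
  qed
qed

end
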